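(* Assume (A) and (N) hold with $\omega_A<0$, and let $G:H_0\to H$ be globally Lipschitz continuous. Then for every $\omega\in\Omega$, $\xi\in H_0$ and every $\tau>0$ the random equation $$\mathrm{d}V(t)=AV(t)\,\mathrm{d}t+G(V(t)+Y_{\theta_t\omega}(0))\,\mathrm{d}t,\quad t\in[0,\tau],\qquad V(0)=\xi-Y_\omega(0),$$ admits a unique integrated (mild) solution $V\in C([0,\tau],H_0)$, i.e. a unique $V\in C([0,\tau],H_0)$ with $$V(t)=T_0(t)(\xi-Y_\omega(0))+\int_0^t(-A_0)^\beta T_0(t-s)(-A)^{-\beta}G(V(s)+Y_{\theta_s\omega}(0))\,\mathrm{d}s,\quad t\in[0,\tau],$$ where $\beta\in(1-1/p^*,1)$.
   Context: Let $H$ be a separable Hilbert space and $A:D(A)\subset H\to H$ a linear operator with $H_0:=\overline{D(A)}\neq H$. The part of $A$ in $H_0$ is $A_0y:=Ay$ on $D(A_0):=\{y\in D(A):Ay\in H_0\}$. Assumption (A): (a) $A_0$ is sectorial on $H_0$, i.e. there are $\bar\omega\in\mathbb{R}$, $\vartheta\in(\pi/2,\pi)$, $\bar M>0$ with $\rho(A_0)\supset S_\vartheta:=\{z\in\mathbb{C}\setminus\{\bar\omega\}:|\arg(z-\bar\omega)|\le\vartheta\}$ and $\|(\lambda-A_0)^{-1}\|\le\bar M/|\lambda-\bar\omega|$ for $\lambda\in S_\vartheta$; (b) there exist $\omega_A\in\mathbb{R}$ and $p^*\in[1,\infty)$ with $(\omega_A,\infty)\subset\rho(A)$ and $\limsup_{\lambda\to+\infty}\lambda^{1/p^*}\|(\lambda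 I-A)^{-1}\|_{\mathcal{L}(H)}<\infty$. Under (A), $A_0$ generates an analytic $C_0$-semigroup $(T_0(t))_{t\ge0}$ on $H_0$ and $A$ generates the integrated semigroup $S_A(t)=(\nu I-A_0)\int_0^tT_0(s)\,\mathrm{d}s\,(\nu I-A)^{-1}$ ($\nu>\omega_A$); for $t>0$, $S_A'(t)x=(-A_0)^\beta T_0(t)(-A)^{-\beta}x$ ($x\in H$, $\beta\in(1-1/p^*,1)$), with $\|(-A)^{-\beta}\|<\infty$ and $\|(-A_0)^\beta T_0(t)\|\le M_\beta t^{-\beta}e^{\omega_At}$. Assumption (N): $(\Omega,\mathcal{F},\mathbb{P},(\theta_t)_{t\in\mathbb{R}})$ is an ergodic metric dynamical system (measurable $\mathbb{P}$-preserving maps, jointly measurable in $(t,\omega)$, $\theta_0=\mathrm{id}$, $\theta_{t+s}=\theta_t\circ\theta_s$, invariant sets of probability $0$ or $1$), and $W$ is a two-sided $Q$-Wiener process on $H$ ($Q$ trace class) with $W_t(\theta_s\omega)=W_{t+s}(\omega)-W_s(\omega)$. For $\omega_A<0$, $Y_\omega(t):=\int_{-\infty}^tS_A'(t-\tau)\,\mathrm{d}W(\tau)$, a continuous $H_0$-valued process, and $Y_{\theta_s\omega}(0)=Y_\omega(s)$. *)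

theory Defs
  imports "HOL-Probability.Probability"
begin

definition ergodic_mds :: "'w measure \<Rightarrow> (real \<Rightarrow> 'w \<Rightarrow> 'w) \<Rightarrow> bool" where
  "ergodic_mds P \<theta> \<longleftrightarrow>
     prob_space P \<and>
     (\<forall>t. \<theta> t \<in> measurable P P \<and> distr P P (\<theta> t) = P) \<and>
     (\<lambda>(t, w). \<theta> t w) \<in> measurable (borel \<Otimes>\<^sub>M P) P \<and>
     (\<forall>w \<in> space P. \<theta> 0 w = w) \<and>
     (\<forall>t s. \<forall>w \<in> space P. \<theta> (t + s) w = \<theta> t (\<theta> s w)) \<and>
     (\<forall>A \<in> sets P. (\<forall>t. \<theta> t -` A \<inter> space P = A) \<longrightarrow>
                      measure P A = 0 \<or> measure P A = 1)"

text \<open>\<open>T0\<close> is a strongly continuous semigroup of bounded linear operators on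
  the closed subspace \<open>H0\<close> (operators are given on the whole space, only their
  action on \<open>H0\<close> matters).\<close>
definition c0_semigroup_on :: "'a::real_normed_vector set \<Rightarrow> (real \<Rightarrow> 'a \<Rightarrow> 'a) \<Rightarrow> bool" where
  "c0_semigroup_on H0 T0 \<longleftrightarrow>
     (\<forall>t\<ge>0. bounded_linear (T0 t) \<and> T0 t ` H0 \<subseteq> H0) \<and>
     (\<forall>x\<in>H0. T0 0 x = x) \<and>
     (\<forall>t\<ge>0. \<forall>s\<ge>0. \<forall>x\<in>H0. T0 (t + s) x = T0 t (T0 s x)) \<and>
     (\<forall>x\<in>H0. continuous_on {0..} (\<lambda>t. T0 t x))"

text \<open>Integrated (mild) solution on \<open>[0,\<tau>]\<close> of
  \<open>V(t) = T0(t)(\<xi> - Y_\<omega>(0)) + \<integral>_0^t Sd(t-s) G(V(s) + Y_{\<theta>_s \<omega>}(0)) ds\<close>,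
  where \<open>Sd t = (-A0)^\<beta> T0(t) (-A)^(-\<beta>) = S_A'(t)\<close>.\<close>
definition mild_solution ::
  "'a::{banach, second_countable_topology} set \<Rightarrow> (real \<Rightarrow> 'a \<Rightarrow> 'a) \<Rightarrow> (real \<Rightarrow> 'a \<Rightarrow> 'a)
   \<Rightarrow> ('a \<Rightarrow> 'a) \<Rightarrow> ('w \<Rightarrow> real \<Rightarrow> 'a) \<Rightarrow> (real \<Rightarrow> 'w \<Rightarrow> 'w) \<Rightarrow> 'w \<Rightarrow> 'a \<Rightarrow> real
   \<Rightarrow> (real \<Rightarrow> 'a) \<Rightarrow> bool" where
  "mild_solution H0 T0 Sd G Y \<theta> \<omega> \<xi> \<tau> V \<longleftrightarrow>
     continuous_on {0..\<tau>} V \<and> V ` {0..\<tau>} \<subseteq> H0 \<and>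
     (\<forall>t\<in>{0..\<tau>}.
        set_integrable lborel {0..t} (\<lambda>s. Sd (t - s) (G (V s + Y (\<theta> s \<omega>) 0))) \<and>
        V t = T0 t (\<xi> - Y \<omega> 0)
              + (LINT s:{0..t}|lborel. Sd (t - s) (G (V s + Y (\<theta> s \<omega>) 0))))"

end

theory Submission
  imports Defs
begin

text \<open>
  Fix \<open>\<omega>\<close> and put \<open>y = Y \<omega>\<close>, \<open>x0 = \<xi> - Y \<omega> 0\<close>. Mild solutions are the fixed points of
  \<open>\<Phi> V t = T0 t x0 + \<integral>\<^sub>0\<^sup>t Sd (t - s) (G (V s + y s)) ds\<close> among continuous
  \<open>H0\<close>-valued functions on \<open>[0,\<tau>]\<close>. As \<open>\<omega>A < 0\<close>, the kernel is bounded by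
  \<open>|M| t\<^sup>-\<^sup>\<beta>\<close> with \<open>\<beta> < 1\<close>; hence its convolution with a continuous function is
  integrable, stays in the closed subspace \<open>H0\<close>, and is continuous in \<open>t\<close> by dominated
  convergence. If \<open>norm (V s - W s) \<le> D exp (\<mu> s)\<close>, the inequality
  \<open>exp (-\<mu> u) \<le> (\<mu> u)\<^sup>-\<^sup>\<gamma>\<close> with \<open>\<gamma> = (1 - \<beta>)/2\<close> gives
  \<open>norm (\<Phi> V t - \<Phi> W t) \<le> K L \<mu>\<^sup>-\<^sup>\<gamma> (\<tau>\<^sup>\<gamma>/\<gamma>) D exp (\<mu> t)\<close>. So for large \<open>\<mu>\<close>
  the map \<open>\<Phi>\<close> is a contraction for the weighted sup distance
  \<open>sup\<^sub>t exp (-\<mu> t) norm (V t - W t)\<close>, and Banach's fixed point theorem gives existence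
  and uniqueness.
\<close>

lemma Bcontfun_ext_cont:
  fixes f :: "real \<Rightarrow> 'a::metric_space"
  assumes "continuous_on {a..b} f"
  shows "Bcontfun (ext_cont f a b) x = f (clamp a b x)"
proof -
  obtain g :: "real \<Rightarrow>\<^sub>C 'a" where g: "\<And>x. g x = f (clamp a b x)"
    using continuous_on_cbox_bcontfunE[of a b f] assms by auto
  then have "ext_cont f a b = apply_bcontfun g"
    by (auto simp: ext_cont_def)
  then show ?thesis
    by (simp add: apply_bcontfun_inverse g)
qed

lemma clamp_in_Icc: "a \<le> b \<Longrightarrow> clamp a b (x::real) \<in> {a..b}"
  using clamp_in_interval[of a b x] by simp

lemma ext_cont_Icc:
  fixes g :: "real \<Rightarrow> 'a::metric_space"
  assumes "continuous_on {0..t} g"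
  shows "continuous_on UNIV (ext_cont g 0 t)" and "\<And>s. s \<in> {0..t} \<Longrightarrow> ext_cont g 0 t s = g s"
  using assms by (auto intro: continuous_on_ext_cont)

lemma weighted_contraction_fixed_point_exists:
  fixes \<Phi> :: "(real \<Rightarrow> 'a::banach) \<Rightarrow> real \<Rightarrow> 'a" and S :: "'a set"
  assumes S: "subspace S" "closed S" and \<tau>: "0 \<le> \<tau>" and k: "0 \<le> k" "k < 1"
    and maps_into: "\<And>V. continuous_on {0..\<tau>} V \<Longrightarrow> V ` {0..\<tau>} \<subseteq> S \<Longrightarrow>
                       continuous_on {0..\<tau>} (\<Phi> V) \<and> \<Phi> V ` {0..\<tau>} \<subseteq> S"
    and contraction: "\<And>V W D t. continuous_on {0..\<tau>} V \<Longrightarrow> V ` {0..\<tau>} \<subseteq> S \<Longrightarrow>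
                       continuous_on {0..\<tau>} W \<Longrightarrow> W ` {0..\<tau>} \<subseteq> S \<Longrightarrow> 0 \<le> D \<Longrightarrow>
                       (\<And>s. s \<in> {0..\<tau>} \<Longrightarrow> norm (V s - W s) \<le> D * exp (\<mu> * s)) \<Longrightarrow> t \<in> {0..\<tau>} \<Longrightarrow>
                       norm (\<Phi> V t - \<Phi> W t) \<le> k * D * exp (\<mu> * t)"
  shows "\<exists>V. continuous_on {0..\<tau>} V \<and> V ` {0..\<tau>} \<subseteq> S \<and> (\<forall>t\<in>{0..\<tau>}. V t = \<Phi> V t)"
proof -
  \<comment> \<open>conjugating \<open>\<Phi>\<close> with the weight \<open>exp (\<mu> t)\<close> turns it into a contraction for the sup
    distance on bounded continuous functions, extended constantly outside \<open>[0,\<tau>]\<close>\<close>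
  define C :: "(real \<Rightarrow>\<^sub>C 'a) set" where "C = PiC UNIV (\<lambda>_. S)"
  have mem_C: "U \<in> C \<longleftrightarrow> (\<forall>t. U t \<in> S)" for U
    by (simp add: C_def mem_PiC_iff Pi_def)
  define lift :: "(real \<Rightarrow>\<^sub>C 'a) \<Rightarrow> real \<Rightarrow> 'a" where "lift U s = exp (\<mu> * s) *\<^sub>R U s" for U s
  have lift: "continuous_on {0..\<tau>} (lift U)" "lift U ` {0..\<tau>} \<subseteq> S" if "U \<in> C" for U
    using that subspace_scale[OF S(1)] unfolding lift_def mem_C
    by (auto intro!: continuous_intros continuous_on_apply_bcontfun)
  define \<Psi> where "\<Psi> U = Bcontfun (ext_cont (\<lambda>t. exp (- (\<mu> * t)) *\<^sub>R \<Phi> (lift U) t) 0 \<tau>)" for U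
  have \<Psi>_apply: "\<Psi> U t = exp (- (\<mu> * clamp 0 \<tau> t)) *\<^sub>R \<Phi> (lift U) (clamp 0 \<tau> t)" if "U \<in> C" for U t
    unfolding \<Psi>_def using maps_into[OF lift[OF that]]
    by (intro Bcontfun_ext_cont continuous_intros) auto
  have \<Psi>_C: "\<Psi> U \<in> C" if "U \<in> C" for U
    using maps_into[OF lift[OF that]] clamp_in_Icc[OF \<tau>] subspace_scale[OF S(1)]
    by (fastforce simp: mem_C \<Psi>_apply[OF that])
  have "dist (\<Psi> U1) (\<Psi> U2) \<le> k * dist U1 U2" if U: "U1 \<in> C" "U2 \<in> C" for U1 U2
  proof (rule dist_bound)
    fix t
    define c where "c = clamp 0 \<tau> t"
    have c: "c \<in> {0..\<tau>}"
      unfolding c_def by (rule clamp_in_Icc[OF \<tau>])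
    have bound: "norm (lift U1 s - lift U2 s) \<le> dist U1 U2 * exp (\<mu> * s)" if "s \<in> {0..\<tau>}" for s
      using dist_bounded[of U1 s U2] by (simp add: lift_def dist_norm flip: scaleR_diff_right)
    have "dist (\<Psi> U1 t) (\<Psi> U2 t) = exp (- (\<mu> * c)) * norm (\<Phi> (lift U1) c - \<Phi> (lift U2) c)"
      by (simp add: \<Psi>_apply U c_def[symmetric] dist_norm flip: scaleR_diff_right)
    also have "\<dots> \<le> exp (- (\<mu> * c)) * (k * dist U1 U2 * exp (\<mu> * c))"
      by (intro mult_left_mono contraction[OF lift[OF U(1)] lift[OF U(2)] zero_le_dist] bound c exp_ge_zero)
    also have "\<dots> = k * dist U1 U2 * (exp (\<mu> * c) * exp (- (\<mu> * c)))"
      by (simp only: mult_ac)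
    finally show "dist (\<Psi> U1 t) (\<Psi> U2 t) \<le> k * dist U1 U2"
      by (simp add: exp_minus_inverse)
  qed
  moreover have "Topological_Spaces.complete C"
    unfolding C_def complete_eq_closed by (rule closed_PiC) (use S in auto)
  moreover have "0 \<in> C"
    using subspace_0[OF S(1)] by (simp add: mem_C)
  ultimately obtain U where U: "U \<in> C" "\<Psi> U = U"
    using Banach_fix[of C k \<Psi>] k \<Psi>_C by blast
  have "lift U t = \<Phi> (lift U) t" if "t \<in> {0..\<tau>}" for t
  proof -
    have "exp (- (\<mu> * t)) *\<^sub>R \<Phi> (lift U) t = U t"
      using arg_cong[OF U(2), of "\<lambda>U. U t"] that by (simp add: \<Psi>_apply[OF U(1)])
    then have "exp (\<mu> * t) *\<^sub>R (exp (- (\<mu> * t)) *\<^sub>R \<Phi> (lift U) t) = lift U t"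
      by (simp add: lift_def)
    then show ?thesis
      by (simp add: exp_minus_inverse)
  qed
  then show ?thesis
    using lift[OF U(1)] by blast
qed

lemma weighted_contraction_fixed_point_unique:
  fixes \<Phi> :: "(real \<Rightarrow> 'a::real_normed_vector) \<Rightarrow> real \<Rightarrow> 'a"
  assumes k: "k < 1"
    and V: "continuous_on {0..\<tau>} V" "\<forall>t\<in>{0..\<tau>}. V t = \<Phi> V t"
    and W: "continuous_on {0..\<tau>} W" "\<forall>t\<in>{0..\<tau>}. W t = \<Phi> W t"
    and contraction: "\<And>D t. 0 \<le> D \<Longrightarrow> (\<And>s. s \<in> {0..\<tau>} \<Longrightarrow> norm (V s - W s) \<le> D * exp (\<mu> * s)) \<Longrightarrow>
                        t \<in> {0..\<tau>} \<Longrightarrow> norm (\<Phi> V t - \<Phi> W t) \<le> k * D * exp (\<mu> * t)"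
  shows "\<forall>t\<in>{0..\<tau>}. W t = V t"
proof (cases "0 \<le> \<tau>")
  case True
  define d where "d s = exp (- (\<mu> * s)) * norm (V s - W s)" for s
  have "continuous_on {0..\<tau>} d"
    unfolding d_def using V(1) W(1) by (intro continuous_intros)
  then obtain s0 where s0: "s0 \<in> {0..\<tau>}" and d_max: "\<And>s. s \<in> {0..\<tau>} \<Longrightarrow> d s \<le> d s0"
    using continuous_attains_sup[of "{0..\<tau>}" d] True by auto
  have d_eq: "norm (V s - W s) = d s * exp (\<mu> * s)" for s
    by (simp add: d_def exp_minus field_simps)
  have d_nonneg: "0 \<le> d s0"
    by (simp add: d_def)
  have bound: "norm (V s - W s) \<le> d s0 * exp (\<mu> * s)" if "s \<in> {0..\<tau>}" for s
    using d_max[OF that] by (simp add: d_eq mult_right_mono)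
  have "d t \<le> k * d s0" if t: "t \<in> {0..\<tau>}" for t
  proof -
    have "norm (V t - W t) = norm (\<Phi> V t - \<Phi> W t)"
      using V(2) W(2) t by metis
    also have "\<dots> \<le> k * d s0 * exp (\<mu> * t)"
      by (rule contraction[OF d_nonneg bound t])
    finally show ?thesis
      by (simp add: d_eq)
  qed
  then have "(1 - k) * d s0 \<le> 0"
    using s0 by (simp add: algebra_simps)
  then have "d s0 \<le> 0"
    using k by (simp add: mult_le_0_iff)
  then have "norm (V t - W t) \<le> 0" if "t \<in> {0..\<tau>}" for t
    using bound[OF that] mult_nonpos_nonneg[OF _ exp_ge_zero, of "d s0" "\<mu> * t"] by linarith
  then show ?thesis
    by simp
qed simp

lemma borel_measurable_implies_sequence_metric_closed:
  fixes f :: "'b \<Rightarrow> 'a::{metric_space, second_countable_topology}"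
  assumes S: "closed S" "S \<noteq> {}" and f: "f \<in> borel_measurable M"
    and f_in: "\<And>x. x \<in> space M \<Longrightarrow> f x \<in> S"
  obtains F where "\<And>i. simple_function M (F i)" "\<And>i x. F i x \<in> S"
    "\<And>x. x \<in> space M \<Longrightarrow> (\<lambda>i. F i x) \<longlonglongrightarrow> f x"
    "\<And>i x. x \<in> space M \<Longrightarrow> dist (F i x) z \<le> 10 * dist (f x) z"
proof -
  \<comment> \<open>\<open>S\<close> need not contain a point nearest to \<open>v\<close>; one within twice the distance will do\<close>
  have "\<exists>w\<in>S. dist v w \<le> 2 * infdist v S" for v
  proof (cases "v \<in> S")
    case False
    then have "infdist v S < 2 * infdist v S"
      using infdist_pos_not_in_closed[OF S] S(2) by simp
    then obtain w where "w \<in> S" "dist v w < 2 * infdist v S"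
      unfolding infdist_notempty[OF S(2)] by (subst (asm) cINF_less_iff) (use S(2) in \<open>auto intro: bdd_belowI[of _ 0]\<close>)
    then show ?thesis by (auto intro: less_imp_le)
  qed (auto intro: bexI[of _ v])
  then obtain r where r: "\<And>v. r v \<in> S" "\<And>v. dist v (r v) \<le> 2 * infdist v S"
    by metis
  obtain F where F: "\<And>i. simple_function M (F i)" and
    lim: "\<And>x. x \<in> space M \<Longrightarrow> (\<lambda>i. F i x) \<longlonglongrightarrow> f x" and
    bound: "\<And>i x. x \<in> space M \<Longrightarrow> dist (F i x) z \<le> 2 * dist (f x) z"
    using borel_measurable_implies_sequence_metric[OF f, of z] by metis
  have near: "dist (r (F i x)) (f x) \<le> 3 * dist (F i x) (f x)" if "x \<in> space M" for i x
    using r(2)[of "F i x"] infdist_le[OF f_in[OF that], of "F i x"] dist_triangle3[of "r (F i x)" "f x" "F i x"]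
    by (simp add: dist_commute)
  show thesis
  proof
    show "simple_function M (r \<circ> F i)" for i
      by (rule simple_function_compose[OF F])
    show "(r \<circ> F i) x \<in> S" for i x
      by (simp add: r)
    show "(\<lambda>i. (r \<circ> F i) x) \<longlonglongrightarrow> f x" if x: "x \<in> space M" for x
    proof (rule tendsto_dist_iff[THEN iffD2], rule Lim_null_comparison)
      show "\<forall>\<^sub>F i in sequentially. norm (dist ((r \<circ> F i) x) (f x)) \<le> 3 * dist (F i x) (f x)"
        using near[OF x] by simp
      show "(\<lambda>i. 3 * dist (F i x) (f x)) \<longlonglongrightarrow> 0"
        using tendsto_dist_iff[THEN iffD1, OF lim[OF x]] by (rule tendsto_mult_right_zero)
    qed
    show "dist ((r \<circ> F i) x) z \<le> 10 * dist (f x) z" if x: "x \<in> space M" for i x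
      using near[OF x, of i] bound[OF x, of i] dist_triangle[of "r (F i x)" z "f x"]
        dist_triangle[of "F i x" "f x" z] by (simp add: dist_commute)
  qed
qed

lemma integral_in_closed_subspace:
  fixes f :: "'b \<Rightarrow> 'a::{banach, second_countable_topology}"
  assumes S: "subspace S" "closed S" and f: "integrable M f"
    and f_in: "\<And>x. x \<in> space M \<Longrightarrow> f x \<in> S"
  shows "integral\<^sup>L M f \<in> S"
proof -
  have f_meas: "f \<in> borel_measurable M"
    using f by (rule borel_measurable_integrable)
  obtain F where F: "\<And>i. simple_function M (F i)" "\<And>i x. F i x \<in> S"
    and lim: "\<And>x. x \<in> space M \<Longrightarrow> (\<lambda>i. F i x) \<longlonglongrightarrow> f x"
    and bound: "\<And>i x. x \<in> space M \<Longrightarrow> dist (F i x) 0 \<le> 10 * dist (f x) 0"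
    using borel_measurable_implies_sequence_metric_closed[OF S(2) _ f_meas f_in] subspace_0[OF S(1)]
    by blast
  have dom: "integrable M (\<lambda>x. 10 * norm (f x))"
    using f by auto
  have F_int: "integrable M (F i)" for i
    using F(1) bound by (intro Bochner_Integration.integrable_bound[OF dom])
      (auto intro: borel_measurable_simple_function)
  have "integral\<^sup>L M (F i) \<in> S" for i
  proof -
    have "Bochner_Integration.simple_bochner_integrable M (F i)"
      using F(1) F_int by (intro simple_bochner_integrableI_bounded) (auto simp: integrable_iff_bounded)
    moreover have "Bochner_Integration.simple_bochner_integral M (F i) \<in> S"
      unfolding Bochner_Integration.simple_bochner_integral_def
      by (intro subspace_sum[OF S(1)] subspace_scale[OF S(1)]) (auto intro: F(2))
    ultimately show ?thesis by (simp add: Bochner_Integration.simple_bochner_integrable_eq_integral)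
  qed
  moreover have "(\<lambda>i. integral\<^sup>L M (F i)) \<longlonglongrightarrow> integral\<^sup>L M f"
    using F(1) bound lim
    by (intro integral_dominated_convergence[OF f_meas _ dom])
      (auto intro: borel_measurable_simple_function)
  ultimately show ?thesis
    using S(2) by (rule closed_sequentially[rotated])
qed

lemma set_integrable_powr_from_0:
  fixes a t :: real
  assumes "a < 1" "0 \<le> t"
  shows "set_integrable lborel {0..t} (\<lambda>u. u powr (-a))"
    and "(LINT u:{0..t}|lborel. u powr (-a)) = t powr (1 - a) / (1 - a)"
proof -
  have hi: "((\<lambda>u. u powr (-a)) has_integral (t powr (-a + 1) / (-a + 1))) {0..t}"
    using assms by (intro has_integral_powr_from_0) auto
  then have "(\<lambda>u. u powr (-a)) absolutely_integrable_on {0..t}"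
    by (intro nonnegative_absolutely_integrable_1) auto
  then have "integrable lebesgue (\<lambda>u. indicator {0..t} u *\<^sub>R u powr (-a))"
    by (simp add: absolutely_integrable_on_def set_integrable_def)
  moreover have "(\<lambda>u. indicator {0..t} u *\<^sub>R u powr (-a)) \<in> borel_measurable lborel"
    by measurable
  ultimately show si: "set_integrable lborel {0..t} (\<lambda>u. u powr (-a))"
    by (simp add: set_integrable_def integrable_completion)
  have "(LINT u:{0..t}|lborel. u powr (-a)) = integral {0..t} (\<lambda>u. u powr (-a))"
    by (rule set_borel_integral_eq_integral(2)[OF si])
  also have "\<dots> = t powr (1 - a) / (1 - a)"
    using integral_unique[OF hi] by simp
  finally show "(LINT u:{0..t}|lborel. u powr (-a)) = t powr (1 - a) / (1 - a)" .
qed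

lemma set_integrable_powr_bound:
  fixes h :: "real \<Rightarrow> 'a::{banach, second_countable_topology}"
  assumes h: "set_borel_measurable lborel {0..t} h" and a: "a < 1" and t: "0 \<le> t"
    and bound: "\<And>u. 0 < u \<Longrightarrow> u \<le> t \<Longrightarrow> norm (h u) \<le> C * u powr (-a)"
  shows "set_integrable lborel {0..t} h"
proof -
  have dominant: "integrable lborel (\<lambda>u. C * (indicator {0..t} u *\<^sub>R u powr (-a)))"
    using set_integrable_powr_from_0(1)[OF a t] unfolding set_integrable_def by simp
  have pointwise: "norm (indicator {0..t} u *\<^sub>R h u) \<le> norm (C * (indicator {0..t} u *\<^sub>R u powr (-a)))"
    if "u \<noteq> 0" for u
  proof (cases "u \<in> {0..t}")
    case True
    then have "norm (h u) \<le> C * u powr (-a)"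
      using that by (intro bound) auto
    then show ?thesis
      using True by simp
  qed simp
  have "AE u in lborel. norm (indicator {0..t} u *\<^sub>R h u) \<le> norm (C * (indicator {0..t} u *\<^sub>R u powr (-a)))"
    using AE_lborel_singleton[of 0] by eventually_elim (rule pointwise)
  with dominant h show ?thesis
    unfolding set_integrable_def set_borel_measurable_def
    by (rule Bochner_Integration.integrable_bound)
qed

lemma norm_set_integral_powr_bound:
  fixes h :: "real \<Rightarrow> 'a::{banach, second_countable_topology}"
  assumes h: "set_integrable lborel {0..t} h" and a: "a < 1" and t: "0 \<le> t"
    and bound: "\<And>u. 0 < u \<Longrightarrow> u \<le> t \<Longrightarrow> norm (h u) \<le> C * u powr (-a)"
  shows "norm (LINT u:{0..t}|lborel. h u) \<le> C * (t powr (1 - a) / (1 - a))"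
proof -
  have "norm (LINT u:{0..t}|lborel. h u) \<le> (LINT u:{0..t}|lborel. norm (h u))"
    by (rule set_integral_norm_bound[OF h])
  also have "\<dots> \<le> (LINT u:{0..t}|lborel. C * u powr (-a))"
  proof (intro set_integral_mono_AE set_integrable_norm[OF h])
    show "set_integrable lborel {0..t} (\<lambda>u. C * u powr (-a))"
      using set_integrable_powr_from_0(1)[OF a t] by (rule set_integrable_mult_right)
    show "AE u\<in>{0..t} in lborel. norm (h u) \<le> C * u powr (-a)"
      using AE_lborel_singleton[of 0] by eventually_elim (auto intro: bound)
  qed
  also have "\<dots> = C * (t powr (1 - a) / (1 - a))"
    using set_integrable_powr_from_0(2)[OF a t] by simp
  finally show ?thesis .
qed

lemma set_integral_reflect:
  fixes f :: "real \<Rightarrow> 'a::{banach, second_countable_topology}"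
  shows "set_integrable lborel {0..t} (\<lambda>s. f (t - s)) \<longleftrightarrow> set_integrable lborel {0..t} f"
    and "(LINT s:{0..t}|lborel. f (t - s)) = (LINT u:{0..t}|lborel. f u)"
proof -
  let ?F = "\<lambda>s. indicator {0..t} s *\<^sub>R f (t - s)"
  have reflect: "(\<lambda>u. ?F (t + (-1) * u)) = (\<lambda>u. indicator {0..t} u *\<^sub>R f u)"
    by (auto simp: fun_eq_iff indicator_def)
  show "set_integrable lborel {0..t} (\<lambda>s. f (t - s)) \<longleftrightarrow> set_integrable lborel {0..t} f"
    using lborel_integrable_real_affine_iff[of "-1" ?F t] by (simp only: set_integrable_def reflect)
  show "(LINT s:{0..t}|lborel. f (t - s)) = (LINT u:{0..t}|lborel. f u)"
    using lborel_integral_real_affine[of "-1" ?F t] unfolding set_lebesgue_integral_def reflect by simp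
qed

lemma exp_minus_le_powr:
  fixes x \<gamma> :: real
  assumes x: "0 < x" and \<gamma>: "0 < \<gamma>" "\<gamma> \<le> 1"
  shows "exp (-x) \<le> x powr (-\<gamma>)"
proof -
  have "x powr \<gamma> \<le> 1 + x"
  proof (cases "x \<le> 1")
    case True
    then have "x powr \<gamma> \<le> 1"
      using x \<gamma> by (intro powr_le1) auto
    then show ?thesis using x by simp
  next
    case False
    then have "x powr \<gamma> \<le> x powr 1"
      using \<gamma> by (intro powr_mono) auto
    then show ?thesis using x by simp
  qed
  also have "\<dots> \<le> exp x"
    by (rule exp_ge_add_one_self)
  finally show ?thesis
    using x by (simp add: exp_minus powr_minus inverse_le_iff_le)
qed

lemma continuous_on_lipschitz_compose_add:
  fixes G :: "'a::real_normed_vector \<Rightarrow> 'b::metric_space"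
  assumes G: "L-lipschitz_on S G" and S: "subspace S"
    and V: "continuous_on A V" "V ` A \<subseteq> S" and y: "continuous_on A y" "y ` A \<subseteq> S"
  shows "continuous_on A (\<lambda>s. G (V s + y s))"
  using V(2) y(2) subspace_add[OF S]
  by (intro continuous_on_compose2[OF lipschitz_on_continuous_on[OF G] continuous_on_add[OF V(1) y(1)]]) auto

locale singular_kernel =
  fixes H0 :: "'a::{banach, second_countable_topology} set" and Sd :: "real \<Rightarrow> 'a \<Rightarrow> 'a"
    and K \<beta> :: real
  assumes H0_subspace: "subspace H0" and H0_closed: "closed H0"
    and \<beta>: "0 \<le> \<beta>" "\<beta> < 1" and K_nonneg: "0 \<le> K"
    and Sd_linear: "\<And>t. 0 < t \<Longrightarrow> bounded_linear (Sd t)"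
    and Sd_range: "\<And>t x. 0 < t \<Longrightarrow> Sd t x \<in> H0"
    and Sd_norm_le: "\<And>t x. 0 < t \<Longrightarrow> norm (Sd t x) \<le> K * t powr (-\<beta>) * norm x"
    and Sd_continuous: "\<And>x. continuous_on {0<..} (\<lambda>t. Sd t x)"
begin

definition conv :: "(real \<Rightarrow> 'a) \<Rightarrow> real \<Rightarrow> 'a" where
  "conv g t = (LINT s:{0..t}|lborel. Sd (t - s) (g s))"

lemma Sd_diff: "0 < t \<Longrightarrow> Sd t (x - y) = Sd t x - Sd t y"
  using Sd_linear[of t] by (simp add: linear_simps)

lemma continuous_on_Sd_apply:
  assumes h: "continuous_on {0<..} h"
  shows "continuous_on {0<..} (\<lambda>u. Sd u (h u))"
  unfolding continuous_on_def
proof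
  fix u0 :: real assume u0: "u0 \<in> {0<..}"
  let ?F = "at u0 within {0<..}"
  have pos: "eventually (\<lambda>u. 0 < u) ?F"
    by (simp add: eventually_at_filter)
  \<comment> \<open>split \<open>Sd u (h u) = Sd u (h u - h u0) + Sd u (h u0)\<close>: the first term is controlled by
    the uniform bound near \<open>u0\<close>, the second by strong continuity\<close>
  have "((\<lambda>u. Sd u (h u - h u0)) \<longlongrightarrow> 0) ?F"
  proof (rule Lim_null_comparison)
    show "eventually (\<lambda>u. norm (Sd u (h u - h u0)) \<le> K * u powr (-\<beta>) * norm (h u - h u0)) ?F"
      using pos by eventually_elim (rule Sd_norm_le)
    have "((\<lambda>u. K * u powr (-\<beta>) * norm (h u - h u0)) \<longlongrightarrow> K * u0 powr (-\<beta>) * norm (h u0 - h u0)) ?F"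
      using h u0 by (intro tendsto_intros) (auto simp: continuous_on_def)
    then show "((\<lambda>u. K * u powr (-\<beta>) * norm (h u - h u0)) \<longlongrightarrow> 0) ?F" by simp
  qed
  moreover have "((\<lambda>u. Sd u (h u0)) \<longlongrightarrow> Sd u0 (h u0)) ?F"
    using Sd_continuous[of "h u0"] u0 by (simp add: continuous_on_def)
  ultimately have "((\<lambda>u. Sd u (h u - h u0) + Sd u (h u0)) \<longlongrightarrow> 0 + Sd u0 (h u0)) ?F"
    by (rule tendsto_add)
  moreover have "eventually (\<lambda>u. Sd u (h u - h u0) + Sd u (h u0) = Sd u (h u)) ?F"
    using pos by eventually_elim (simp add: Sd_diff)
  ultimately show "((\<lambda>u. Sd u (h u)) \<longlongrightarrow> Sd u0 (h u0)) ?F"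
    by (simp add: Lim_transform_eventually)
qed

lemma Sd_convolution_measurable:
  assumes g: "continuous_on UNIV g"
  shows "set_borel_measurable lborel {0..t} (\<lambda>u. Sd u (g (t - u)))"
proof -
  have "continuous_on {0<..t} (\<lambda>u. Sd u (g (t - u)))"
    by (rule continuous_on_subset[OF continuous_on_Sd_apply])
      (auto intro!: continuous_intros continuous_on_compose2[OF g])
  then have [measurable]: "(\<lambda>u. indicator {0<..t} u *\<^sub>R Sd u (g (t - u))) \<in> borel_measurable borel"
    by (intro borel_measurable_continuous_on_indicator) auto
  have "(\<lambda>u. if u = 0 then indicator {0..t} u *\<^sub>R Sd 0 (g t)
            else indicator {0<..t} u *\<^sub>R Sd u (g (t - u))) \<in> borel_measurable borel"
    by measurable
  also have "(\<lambda>u. if u = 0 then indicator {0..t} u *\<^sub>R Sd 0 (g t)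
            else indicator {0<..t} u *\<^sub>R Sd u (g (t - u))) = (\<lambda>u. indicator {0..t} u *\<^sub>R Sd u (g (t - u)))"
    by (auto simp: fun_eq_iff indicator_def)
  finally show ?thesis
    by (simp add: set_borel_measurable_def)
qed

lemma Sd_convolution_integrable:
  assumes g: "continuous_on UNIV g" and t: "0 \<le> t"
  shows "set_integrable lborel {0..t} (\<lambda>u. Sd u (g (t - u)))"
proof -
  have "bounded (g ` {0..t})"
    by (intro compact_imp_bounded compact_continuous_image continuous_on_subset[OF g]) auto
  then obtain B where B: "\<And>s. s \<in> {0..t} \<Longrightarrow> norm (g s) \<le> B"
    unfolding bounded_iff by blast
  show ?thesis
  proof (rule set_integrable_powr_bound[OF Sd_convolution_measurable[OF g] \<beta>(2) t])
    fix u :: real assume u: "0 < u" "u \<le> t"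
    have "norm (Sd u (g (t - u))) \<le> K * u powr (-\<beta>) * norm (g (t - u))"
      using u(1) by (rule Sd_norm_le)
    also have "\<dots> \<le> K * u powr (-\<beta>) * B"
      using B[of "t - u"] u K_nonneg by (intro mult_left_mono) auto
    finally show "norm (Sd u (g (t - u))) \<le> K * B * u powr (-\<beta>)"
      by (simp add: mult_ac)
  qed
qed

lemma Sd_convolution_in_H0:
  assumes g: "continuous_on UNIV g" and t: "0 \<le> t"
  shows "(LINT u:{0..t}|lborel. Sd u (g (t - u))) \<in> H0"
proof -
  \<comment> \<open>\<open>Sd 0\<close> need not map into \<open>H0\<close>, so the null set \<open>{0}\<close> is discarded first\<close>
  note int = Sd_convolution_integrable[OF g t]
  have int': "set_integrable lborel {0<..t} (\<lambda>u. Sd u (g (t - u)))"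
    by (rule set_integrable_subset[OF int]) auto
  have meas: "set_borel_measurable lborel {0..t} (\<lambda>u. Sd u (g (t - u)))"
    by (rule Sd_convolution_measurable[OF g])
  have "(LINT u:{0..t}|lborel. Sd u (g (t - u))) = (LINT u:{0<..t}|lborel. Sd u (g (t - u)))"
  proof (rule set_integral_cong_set[OF set_borel_measurable_subset[OF meas] meas])
    show "AE u in lborel. (u \<in> {0<..t}) = (u \<in> {0..t})"
      using AE_lborel_singleton[of 0] by eventually_elim auto
  qed auto
  also have "\<dots> \<in> H0"
    unfolding set_lebesgue_integral_def
    using int' Sd_range subspace_0[OF H0_subspace] subspace_scale[OF H0_subspace]
    by (intro integral_in_closed_subspace[OF H0_subspace H0_closed])
      (auto simp: set_integrable_def indicator_def)
  finally show ?thesis .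
qed

lemma Sd_convolution_integrand_tendsto:
  assumes g: "continuous_on UNIV g" and x: "x \<longlonglongrightarrow> a" and u: "u \<noteq> 0" "u \<noteq> a"
  shows "(\<lambda>n. indicator {0..x n} u *\<^sub>R Sd u (g (x n - u))) \<longlonglongrightarrow> indicator {0..a} u *\<^sub>R Sd u (g (a - u))"
proof (cases "0 < u")
  case True
  have "eventually (\<lambda>n. indicator {0..x n} u = (indicator {0..a} u :: real)) sequentially"
  proof (cases "u < a")
    case True
    show ?thesis
      using order_tendstoD(1)[OF x True] by eventually_elim (use True \<open>0 < u\<close> in \<open>auto simp: indicator_def\<close>)
  next
    case False
    then have "a < u"
      using u(2) by simp
    show ?thesis
      using order_tendstoD(2)[OF x \<open>a < u\<close>] by eventually_elim (use \<open>a < u\<close> in \<open>auto simp: indicator_def\<close>)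
  qed
  then have "(\<lambda>n. indicator {0..x n} u :: real) \<longlonglongrightarrow> indicator {0..a} u"
    by (simp add: tendsto_eventually)
  moreover have "(\<lambda>n. Sd u (g (x n - u))) \<longlonglongrightarrow> Sd u (g (a - u))"
    using True g x
    by (intro bounded_linear.tendsto[OF Sd_linear] isCont_tendsto_compose[of _ g] tendsto_intros)
      (auto simp: continuous_on_eq_continuous_at)
  ultimately show ?thesis
    by (rule tendsto_scaleR)
next
  case False
  then show ?thesis
    using u(1) by (simp add: indicator_def)
qed

lemma Sd_convolution_integrand_bound:
  assumes B: "\<And>s. s \<in> {0..\<tau>} \<Longrightarrow> norm (g s) \<le> B" and x: "x \<in> {0..\<tau>}" and u: "u \<noteq> 0"
  shows "norm (indicator {0..x} u *\<^sub>R Sd u (g (x - u))) \<le> K * B * (indicator {0..\<tau>} u *\<^sub>R u powr (-\<beta>))"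
proof (cases "u \<in> {0..x}")
  case True
  then have u: "0 < u" "u \<le> x"
    using u by auto
  have "norm (Sd u (g (x - u))) \<le> K * u powr (-\<beta>) * norm (g (x - u))"
    using u(1) by (rule Sd_norm_le)
  also have "\<dots> \<le> K * u powr (-\<beta>) * B"
    using B[of "x - u"] u x K_nonneg by (intro mult_left_mono) auto
  finally show ?thesis
    using True x by (simp add: indicator_def mult_ac)
next
  case False
  have "0 \<le> B"
    using B[of 0] x by (auto intro: order_trans[OF norm_ge_zero])
  then show ?thesis
    using False K_nonneg by (auto simp: indicator_def)
qed

lemma Sd_convolution_continuous:
  assumes g: "continuous_on UNIV g"
  shows "continuous_on {0..\<tau>} (\<lambda>t. LINT u:{0..t}|lborel. Sd u (g (t - u)))"
proof (rule continuous_on_sequentiallyI)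
  fix x :: "nat \<Rightarrow> real" and a
  assume x: "\<forall>n. x n \<in> {0..\<tau>}" and a: "a \<in> {0..\<tau>}" and lim: "x \<longlonglongrightarrow> a"
  have "bounded (g ` {0..\<tau>})"
    by (intro compact_imp_bounded compact_continuous_image continuous_on_subset[OF g]) auto
  then obtain B where B: "\<And>s. s \<in> {0..\<tau>} \<Longrightarrow> norm (g s) \<le> B"
    unfolding bounded_iff by blast
  \<comment> \<open>after the substitution \<open>u = t - s\<close> the singularity sits at \<open>u = 0\<close> for every \<open>t\<close>,
    so a single weakly singular function dominates all integrands\<close>
  show "(\<lambda>n. LINT u:{0..x n}|lborel. Sd u (g (x n - u))) \<longlonglongrightarrow> (LINT u:{0..a}|lborel. Sd u (g (a - u)))"
    unfolding set_lebesgue_integral_def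
  proof (rule integral_dominated_convergence)
    show "(\<lambda>u. indicator {0..a} u *\<^sub>R Sd u (g (a - u))) \<in> borel_measurable lborel"
      "\<And>n. (\<lambda>u. indicator {0..x n} u *\<^sub>R Sd u (g (x n - u))) \<in> borel_measurable lborel"
      using Sd_convolution_measurable[OF g] by (simp_all add: set_borel_measurable_def)
    show "integrable lborel (\<lambda>u. K * B * (indicator {0..\<tau>} u *\<^sub>R u powr (-\<beta>)))"
      using set_integrable_powr_from_0(1)[of \<beta> \<tau>] \<beta> a unfolding set_integrable_def by auto
    show "AE u in lborel. (\<lambda>n. indicator {0..x n} u *\<^sub>R Sd u (g (x n - u))) \<longlonglongrightarrow>
                           indicator {0..a} u *\<^sub>R Sd u (g (a - u))"
      using AE_lborel_singleton[of 0] AE_lborel_singleton[of a]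
      by eventually_elim (rule Sd_convolution_integrand_tendsto[OF g lim])
    show "AE u in lborel. norm (indicator {0..x n} u *\<^sub>R Sd u (g (x n - u)))
                          \<le> K * B * (indicator {0..\<tau>} u *\<^sub>R u powr (-\<beta>))" for n
      using AE_lborel_singleton[of 0] by eventually_elim (rule Sd_convolution_integrand_bound[OF B x[rule_format]])
  qed
qed

lemma conv_cong: "(\<And>s. s \<in> {0..t} \<Longrightarrow> g1 s = g2 s) \<Longrightarrow> conv g1 t = conv g2 t"
  unfolding conv_def by (rule set_lebesgue_integral_cong) auto

lemma conv_reflect: "conv g t = (LINT u:{0..t}|lborel. Sd u (g (t - u)))"
  using set_integral_reflect(2)[where f = "\<lambda>u. Sd u (g (t - u))" and t = t] by (simp add: conv_def)

lemma conv_integrable: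
  assumes g: "continuous_on {0..t} g" and t: "0 \<le> t"
  shows "set_integrable lborel {0..t} (\<lambda>s. Sd (t - s) (g s))"
proof -
  let ?g = "ext_cont g 0 t"
  have "set_integrable lborel {0..t} (\<lambda>s. Sd (t - s) (?g s))"
    using Sd_convolution_integrable[OF ext_cont_Icc(1)[OF g] t]
      set_integral_reflect(1)[where f = "\<lambda>u. Sd u (?g (t - u))" and t = t] by simp
  then show ?thesis
    by (rule set_integrable_cong[THEN iffD1, rotated -1]) (auto simp: ext_cont_Icc(2)[OF g])
qed

lemma conv_in_H0:
  assumes g: "continuous_on {0..t} g" and t: "0 \<le> t"
  shows "conv g t \<in> H0"
proof -
  have "conv g t = conv (ext_cont g 0 t) t"
    by (rule conv_cong) (simp add: ext_cont_Icc(2)[OF g])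
  then show ?thesis
    using Sd_convolution_in_H0[OF ext_cont_Icc(1)[OF g] t] by (simp add: conv_reflect)
qed

lemma conv_continuous:
  assumes g: "continuous_on {0..\<tau>} g"
  shows "continuous_on {0..\<tau>} (conv g)"
proof -
  have "conv g t = conv (ext_cont g 0 \<tau>) t" if "t \<in> {0..\<tau>}" for t
    using that by (intro conv_cong) (simp add: ext_cont_Icc(2)[OF g])
  moreover have "continuous_on {0..\<tau>} (conv (ext_cont g 0 \<tau>))"
    using Sd_convolution_continuous[OF ext_cont_Icc(1)[OF g], of \<tau>] by (simp add: conv_reflect[abs_def])
  ultimately show ?thesis
    using continuous_on_cong[of "{0..\<tau>}" "{0..\<tau>}" "conv g" "conv (ext_cont g 0 \<tau>)"] by blast
qed

lemma conv_diff_le: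
  assumes g: "continuous_on {0..t} g1" "continuous_on {0..t} g2" and t: "0 \<le> t" and \<mu>: "0 < \<mu>"
    and bound: "\<And>s. s \<in> {0..t} \<Longrightarrow> norm (g1 s - g2 s) \<le> D * exp (\<mu> * s)"
  defines "\<gamma> \<equiv> (1 - \<beta>) / 2"
  shows "norm (conv g1 t - conv g2 t) \<le> K * D * \<mu> powr (-\<gamma>) * (t powr \<gamma> / \<gamma>) * exp (\<mu> * t)"
proof -
  have \<gamma>: "0 < \<gamma>" "\<gamma> \<le> 1" "\<beta> + \<gamma> < 1" "1 - (\<beta> + \<gamma>) = \<gamma>"
    using \<beta> by (auto simp: \<gamma>_def field_simps)
  have D: "0 \<le> D"
    using bound[of 0] t by (auto intro: order_trans[OF norm_ge_zero])
  define C where "C = K * D * exp (\<mu> * t) * \<mu> powr (-\<gamma>)"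
  have int: "set_integrable lborel {0..t} (\<lambda>u. Sd u (g (t - u)))" if "continuous_on {0..t} g" for g
    using conv_integrable[OF that t] set_integral_reflect(1)[where f = "\<lambda>u. Sd u (g (t - u))" and t = t] by simp
  have "conv g1 t - conv g2 t = (LINT u:{0..t}|lborel. Sd u (g1 (t - u)) - Sd u (g2 (t - u)))"
    by (simp add: conv_reflect set_integral_diff(2)[OF int[OF g(1)] int[OF g(2)]])
  also have "norm \<dots> \<le> C * (t powr (1 - (\<beta> + \<gamma>)) / (1 - (\<beta> + \<gamma>)))"
  proof (rule norm_set_integral_powr_bound[OF set_integral_diff(1)[OF int[OF g(1)] int[OF g(2)]] \<gamma>(3) t])
    fix u :: real assume u: "0 < u" "u \<le> t"
    have "norm (Sd u (g1 (t - u)) - Sd u (g2 (t - u))) \<le> K * u powr (-\<beta>) * norm (g1 (t - u) - g2 (t - u))"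
      using Sd_norm_le[OF u(1)] by (simp add: Sd_diff[OF u(1), symmetric])
    also have "\<dots> \<le> K * u powr (-\<beta>) * (D * exp (\<mu> * t) * exp (- (\<mu> * u)))"
      using bound[of "t - u"] u K_nonneg by (intro mult_left_mono) (auto simp: algebra_simps exp_diff exp_minus field_simps)
    also have "\<dots> \<le> K * u powr (-\<beta>) * (D * exp (\<mu> * t) * (\<mu> * u) powr (-\<gamma>))"
      using exp_minus_le_powr[of "\<mu> * u" \<gamma>] \<mu> u \<gamma> K_nonneg D by (intro mult_left_mono) auto
    also have "\<dots> = C * (u powr (-\<beta>) * u powr (-\<gamma>))"
      using \<mu> u by (simp add: C_def powr_mult mult_ac)
    also have "\<dots> = C * u powr (-(\<beta> + \<gamma>))"
      by (simp add: powr_add[symmetric])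
    finally show "norm (Sd u (g1 (t - u)) - Sd u (g2 (t - u))) \<le> C * u powr (-(\<beta> + \<gamma>))" .
  qed
  finally show ?thesis
    by (simp add: \<gamma>(4) C_def mult_ac)
qed

lemma conv_lipschitz_diff_le:
  assumes G: "L-lipschitz_on H0 G" and \<mu>: "0 < \<mu>" and t: "t \<in> {0..\<tau>}"
    and V: "continuous_on {0..\<tau>} V" "V ` {0..\<tau>} \<subseteq> H0"
    and W: "continuous_on {0..\<tau>} W" "W ` {0..\<tau>} \<subseteq> H0"
    and y: "continuous_on {0..\<tau>} y" "y ` {0..\<tau>} \<subseteq> H0"
    and D: "0 \<le> D" and dist: "\<And>s. s \<in> {0..\<tau>} \<Longrightarrow> norm (V s - W s) \<le> D * exp (\<mu> * s)"
  defines "\<gamma> \<equiv> (1 - \<beta>) / 2"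
  shows "norm (conv (\<lambda>s. G (V s + y s)) t - conv (\<lambda>s. G (W s + y s)) t)
         \<le> K * L * \<mu> powr (-\<gamma>) * (\<tau> powr \<gamma> / \<gamma>) * D * exp (\<mu> * t)"
proof -
  have \<gamma>: "0 < \<gamma>"
    using \<beta> by (simp add: \<gamma>_def)
  have gV: "continuous_on {0..t} (\<lambda>s. G (V s + y s))"
    by (rule continuous_on_subset[OF continuous_on_lipschitz_compose_add[OF G H0_subspace V y]]) (use t in auto)
  have gW: "continuous_on {0..t} (\<lambda>s. G (W s + y s))"
    by (rule continuous_on_subset[OF continuous_on_lipschitz_compose_add[OF G H0_subspace W y]]) (use t in auto)
  have "norm (G (V s + y s) - G (W s + y s)) \<le> L * D * exp (\<mu> * s)" if s: "s \<in> {0..t}" for s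
  proof -
    have s': "s \<in> {0..\<tau>}"
      using s t by auto
    have "norm (G (V s + y s) - G (W s + y s)) \<le> L * norm ((V s + y s) - (W s + y s))"
      using V(2) W(2) y(2) s' by (intro lipschitz_on_normD[OF G] subspace_add[OF H0_subspace]) auto
    also have "\<dots> \<le> L * (D * exp (\<mu> * s))"
      using dist[OF s'] lipschitz_on_nonneg[OF G] by (intro mult_left_mono) auto
    finally show ?thesis by simp
  qed
  then have "norm (conv (\<lambda>s. G (V s + y s)) t - conv (\<lambda>s. G (W s + y s)) t)
             \<le> K * (L * D) * \<mu> powr (-\<gamma>) * (t powr \<gamma> / \<gamma>) * exp (\<mu> * t)"
    using conv_diff_le[OF gV gW _ \<mu>, of "L * D"] t by (simp add: \<gamma>_def mult_ac)
  also have "\<dots> \<le> K * (L * D) * \<mu> powr (-\<gamma>) * (\<tau> powr \<gamma> / \<gamma>) * exp (\<mu> * t)"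
    using t \<gamma> K_nonneg lipschitz_on_nonneg[OF G] D
    by (intro mult_right_mono mult_left_mono divide_right_mono powr_mono2) auto
  finally show ?thesis
    by (simp only: mult_ac)
qed

lemma integral_equation_unique_solution:
  assumes G: "L-lipschitz_on H0 G" and \<tau>: "0 \<le> \<tau>"
    and f: "continuous_on {0..\<tau>} f" "f ` {0..\<tau>} \<subseteq> H0"
    and y: "continuous_on {0..\<tau>} y" "y ` {0..\<tau>} \<subseteq> H0"
  shows "\<exists>V. (continuous_on {0..\<tau>} V \<and> V ` {0..\<tau>} \<subseteq> H0 \<and>
                (\<forall>t\<in>{0..\<tau>}. V t = f t + conv (\<lambda>s. G (V s + y s)) t)) \<and>
             (\<forall>W. continuous_on {0..\<tau>} W \<and> W ` {0..\<tau>} \<subseteq> H0 \<and>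
                  (\<forall>t\<in>{0..\<tau>}. W t = f t + conv (\<lambda>s. G (W s + y s)) t) \<longrightarrow>
                  (\<forall>t\<in>{0..\<tau>}. W t = V t))"
proof -
  define \<Phi> where "\<Phi> V t = f t + conv (\<lambda>s. G (V s + y s)) t" for V t
  define \<gamma> where "\<gamma> = (1 - \<beta>) / 2"
  define A where "A = K * L * (\<tau> powr \<gamma> / \<gamma>)"
  \<comment> \<open>the weight \<open>exp (\<mu> s)\<close> brings the Lipschitz constant \<open>A \<mu>^-\<gamma>\<close> of \<open>\<Phi>\<close> below \<open>1/2\<close>\<close>
  define \<mu> where "\<mu> = (2 * A + 1) powr (1 / \<gamma>)"
  have \<gamma>: "0 < \<gamma>"
    using \<beta> by (simp add: \<gamma>_def)
  have A: "0 \<le> A"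
    using K_nonneg lipschitz_on_nonneg[OF G] \<gamma> by (simp add: A_def)
  have \<mu>: "0 < \<mu>" and \<mu>_powr: "\<mu> powr (-\<gamma>) = 1 / (2 * A + 1)"
    using A \<gamma> by (simp_all add: \<mu>_def powr_powr powr_minus_divide)
  have k: "0 \<le> A * \<mu> powr (-\<gamma>)" "A * \<mu> powr (-\<gamma>) < 1"
    using A by (auto simp: \<mu>_powr)
  have maps_into: "continuous_on {0..\<tau>} (\<Phi> V) \<and> \<Phi> V ` {0..\<tau>} \<subseteq> H0"
    if V: "continuous_on {0..\<tau>} V" "V ` {0..\<tau>} \<subseteq> H0" for V
  proof -
    have g: "continuous_on {0..\<tau>} (\<lambda>s. G (V s + y s))"
      by (rule continuous_on_lipschitz_compose_add[OF G H0_subspace V y])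
    show ?thesis
      unfolding \<Phi>_def
      using f conv_continuous[OF g] conv_in_H0[OF continuous_on_subset[OF g]] subspace_add[OF H0_subspace]
      by (auto intro!: continuous_intros)
  qed
  have contraction: "norm (\<Phi> V t - \<Phi> W t) \<le> A * \<mu> powr (-\<gamma>) * D * exp (\<mu> * t)"
    if "continuous_on {0..\<tau>} V" "V ` {0..\<tau>} \<subseteq> H0" "continuous_on {0..\<tau>} W" "W ` {0..\<tau>} \<subseteq> H0"
      "0 \<le> D" "\<And>s. s \<in> {0..\<tau>} \<Longrightarrow> norm (V s - W s) \<le> D * exp (\<mu> * s)" "t \<in> {0..\<tau>}" for V W D t
    using conv_lipschitz_diff_le[OF G \<mu> that(7) that(1,2) that(3,4) y that(5,6)]
    unfolding \<Phi>_def A_def \<gamma>_def by (simp only: add_diff_cancel_left mult_ac)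
  obtain V where V: "continuous_on {0..\<tau>} V" "V ` {0..\<tau>} \<subseteq> H0" "\<forall>t\<in>{0..\<tau>}. V t = \<Phi> V t"
    using weighted_contraction_fixed_point_exists[where \<Phi> = \<Phi>, OF H0_subspace H0_closed \<tau> k maps_into contraction] by blast
  have "\<forall>t\<in>{0..\<tau>}. W t = V t"
    if W: "continuous_on {0..\<tau>} W" "W ` {0..\<tau>} \<subseteq> H0" "\<forall>t\<in>{0..\<tau>}. W t = \<Phi> W t" for W
    by (rule weighted_contraction_fixed_point_unique[where \<Phi> = \<Phi>, OF k(2) V(1,3) W(1,3) contraction[OF V(1,2) W(1,2)]])
  with V show ?thesis
    unfolding \<Phi>_def by blast
qed

lemma mild_solution_iff:
  assumes G: "L-lipschitz_on H0 G" and Y: "continuous_on UNIV (Y \<omega>)" "\<And>s. Y \<omega> s \<in> H0"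
    and Y_shift: "\<And>s. Y (\<theta> s \<omega>) 0 = Y \<omega> s"
  shows "mild_solution H0 T0 Sd G Y \<theta> \<omega> \<xi> \<tau> V \<longleftrightarrow>
           continuous_on {0..\<tau>} V \<and> V ` {0..\<tau>} \<subseteq> H0 \<and>
           (\<forall>t\<in>{0..\<tau>}. V t = T0 t (\<xi> - Y \<omega> 0) + conv (\<lambda>s. G (V s + Y \<omega> s)) t)"
proof -
  have integrable: "set_integrable lborel {0..t} (\<lambda>s. Sd (t - s) (G (V s + Y \<omega> s)))"
    if V: "continuous_on {0..\<tau>} V" "V ` {0..\<tau>} \<subseteq> H0" and t: "t \<in> {0..\<tau>}" for t
  proof (rule conv_integrable)
    show "continuous_on {0..t} (\<lambda>s. G (V s + Y \<omega> s))"
      using V t Y by (intro continuous_on_lipschitz_compose_add[OF G H0_subspace])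
        (auto elim!: continuous_on_subset)
  qed (use t in simp)
  have "mild_solution H0 T0 Sd G Y \<theta> \<omega> \<xi> \<tau> V \<longleftrightarrow>
           continuous_on {0..\<tau>} V \<and> V ` {0..\<tau>} \<subseteq> H0 \<and>
           (\<forall>t\<in>{0..\<tau>}. set_integrable lborel {0..t} (\<lambda>s. Sd (t - s) (G (V s + Y \<omega> s))) \<and>
              V t = T0 t (\<xi> - Y \<omega> 0) + conv (\<lambda>s. G (V s + Y \<omega> s)) t)"
    by (simp only: mild_solution_def conv_def Y_shift)
  also have "\<dots> \<longleftrightarrow> continuous_on {0..\<tau>} V \<and> V ` {0..\<tau>} \<subseteq> H0 \<and>
           (\<forall>t\<in>{0..\<tau>}. V t = T0 t (\<xi> - Y \<omega> 0) + conv (\<lambda>s. G (V s + Y \<omega> s)) t)"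
    using integrable by blast
  finally show ?thesis .
qed

end

lemma singular_kernel_exp_bound:
  fixes Sd :: "real \<Rightarrow> 'a::{banach, second_countable_topology} \<Rightarrow> 'a"
  assumes H0: "subspace H0" "closed H0" and \<beta>: "0 \<le> \<beta>" "\<beta> < 1" and \<omega>: "\<omega> \<le> 0"
    and Sd_linear: "\<And>t. 0 < t \<Longrightarrow> bounded_linear (Sd t)"
    and Sd_range: "\<And>t x. 0 < t \<Longrightarrow> Sd t x \<in> H0"
    and Sd_norm_le: "\<And>t x. 0 < t \<Longrightarrow> norm (Sd t x) \<le> M * t powr (-\<beta>) * exp (\<omega> * t) * norm x"
    and Sd_continuous: "\<And>x. continuous_on {0<..} (\<lambda>t. Sd t x)"
  shows "singular_kernel H0 Sd \<bar>M\<bar> \<beta>"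
proof (rule singular_kernel.intro)
  fix t :: real and x :: 'a assume t: "0 < t"
  have "exp (\<omega> * t) \<le> 1"
    using \<omega> t by (simp add: mult_nonpos_nonneg)
  have "M * exp (\<omega> * t) \<le> \<bar>M\<bar> * exp (\<omega> * t)"
    by (intro mult_right_mono) auto
  also have "\<dots> \<le> \<bar>M\<bar>"
    using \<open>exp (\<omega> * t) \<le> 1\<close> by (intro mult_left_le) auto
  finally have "M * exp (\<omega> * t) * (t powr (-\<beta>) * norm x) \<le> \<bar>M\<bar> * (t powr (-\<beta>) * norm x)"
    by (intro mult_right_mono) auto
  then show "norm (Sd t x) \<le> \<bar>M\<bar> * t powr (-\<beta>) * norm x"
    using Sd_norm_le[OF t, of x] by (simp add: mult_ac)
qed (use assms in auto)

lemma c0_semigroup_on_orbit: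
  assumes "c0_semigroup_on H0 T0" and "x \<in> H0"
  shows "continuous_on {0..\<tau>} (\<lambda>t. T0 t x)" and "(\<lambda>t. T0 t x) ` {0..\<tau>} \<subseteq> H0"
proof -
  have "continuous_on {0..} (\<lambda>t. T0 t x)" "\<And>t. 0 \<le> t \<Longrightarrow> T0 t x \<in> H0"
    using assms unfolding c0_semigroup_on_def by blast+
  then show "continuous_on {0..\<tau>} (\<lambda>t. T0 t x)" and "(\<lambda>t. T0 t x) ` {0..\<tau>} \<subseteq> H0"
    by (auto elim: continuous_on_subset)
qed

theorem theorem3p5:
  fixes H0 :: "'a::{real_inner, banach, second_countable_topology} set"
    and T0 Sd :: "real \<Rightarrow> 'a \<Rightarrow> 'a"
    and G :: "'a \<Rightarrow> 'a"
    and P :: "'w measure" and \<theta> :: "real \<Rightarrow> 'w \<Rightarrow> 'w"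
    and Y :: "'w \<Rightarrow> real \<Rightarrow> 'a"
    and \<omega>A p\<^sub>s \<beta> M :: real
  assumes H0: "subspace H0" "closed H0" "H0 \<noteq> UNIV"
    and semigroup: "c0_semigroup_on H0 T0"
    and pstar: "p\<^sub>s \<ge> 1" and beta: "1 - 1 / p\<^sub>s < \<beta>" "\<beta> < 1"
    and omegaA: "\<omega>A < 0"
    and Sd_lin: "\<And>t. t > 0 \<Longrightarrow> bounded_linear (Sd t)"
    and Sd_range: "\<And>t x. t > 0 \<Longrightarrow> Sd t x \<in> H0"
    and Sd_bound: "\<And>t x. t > 0 \<Longrightarrow> norm (Sd t x) \<le> M * t powr (- \<beta>) * exp (\<omega>A * t) * norm x"
    and Sd_cont: "\<And>x. continuous_on {0<..} (\<lambda>t. Sd t x)"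
    and Sd_semigroup: "\<And>t s x. t \<ge> 0 \<Longrightarrow> s > 0 \<Longrightarrow> T0 t (Sd s x) = Sd (t + s) x"
    and mds: "ergodic_mds P \<theta>"
    and Y_cont: "\<And>\<omega>. continuous_on UNIV (Y \<omega>)"
    and Y_range: "\<And>\<omega> t. Y \<omega> t \<in> H0"
    and Y_shift: "\<And>\<omega> s. Y (\<theta> s \<omega>) 0 = Y \<omega> s"
    and G_lip: "\<exists>L. L-lipschitz_on H0 G"
  shows "\<forall>\<omega> \<xi> \<tau>. \<xi> \<in> H0 \<longrightarrow> \<tau> > 0 \<longrightarrow>
           (\<exists>V. mild_solution H0 T0 Sd G Y \<theta> \<omega> \<xi> \<tau> V \<and>
                (\<forall>W. mild_solution H0 T0 Sd G Y \<theta> \<omega> \<xi> \<tau> W \<longrightarrow> (\<forall>t\<in>{0..\<tau>}. W t = V t)))"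
proof (intro allI impI)
  fix \<omega> \<xi> and \<tau> :: real
  assume \<xi>: "\<xi> \<in> H0" and \<tau>: "0 < \<tau>"
  obtain L where G: "L-lipschitz_on H0 G"
    using G_lip by blast
  have "1 / p\<^sub>s \<le> 1"
    using pstar by simp
  then have \<beta>_nonneg: "0 \<le> \<beta>"
    using beta(1) by linarith
  interpret singular_kernel H0 Sd "\<bar>M\<bar>" \<beta>
    by (rule singular_kernel_exp_bound[OF H0(1,2) \<beta>_nonneg beta(2) less_imp_le[OF omegaA]
          Sd_lin Sd_range Sd_bound Sd_cont])
  have "\<xi> - Y \<omega> 0 \<in> H0"
    using \<xi> Y_range subspace_diff[OF H0(1)] by blast
  note T0 = c0_semigroup_on_orbit[OF semigroup this]
  have Y: "continuous_on {0..\<tau>} (Y \<omega>)" "Y \<omega> ` {0..\<tau>} \<subseteq> H0"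
    using continuous_on_subset[OF Y_cont] Y_range by auto
  show "\<exists>V. mild_solution H0 T0 Sd G Y \<theta> \<omega> \<xi> \<tau> V \<and>
          (\<forall>W. mild_solution H0 T0 Sd G Y \<theta> \<omega> \<xi> \<tau> W \<longrightarrow> (\<forall>t\<in>{0..\<tau>}. W t = V t))"
    unfolding mild_solution_iff[where Y = Y and \<theta> = \<theta> and \<omega> = \<omega>, OF G Y_cont Y_range Y_shift]
    by (rule integral_equation_unique_solution[OF G less_imp_le[OF \<tau>] T0 Y])
qed

end
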